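(* Let $a<b$ be real numbers, let the outcome set be $\Omega=[a,b]$ and the forecast set $\Gamma$ be the set of all probability distribution functions on $[a,b]$, and let the loss be the continuous ranked probability score $$\mathrm{CRPS}(F,y)=\int_a^b (F(u)-H(u-y))^2\,du,$$ where $H(x)=0$ for $x<0$ and $H(x)=1$ for $x\ge0$. Then $\mathrm{CRPS}$ is $\frac{2}{b-a}$-mixable. Moreover, for any $N\ge1$, any probability distribution functions $F_1,\dots,F_N\in\Gamma$ and any probability vector $\mathbf{q}=(q_1,\dots,q_N)$ ($q_i\ge0$, $\sum_i q_i=1$), the function $$F(u)=\frac{1}{2}-\frac{1}{4}\ln\frac{\sum_{i=1}^N q_i e^{-2(F_i(u))^2}}{\sum_{i=1}^N q_i e^{-2(1-F_i(u))^2}},\qquad u\in[a,b],$$ is a probability distribution function and satisfies, for all $y\in[a,b]$, $$e^{-\frac{2}{b-a}\mathrm{CRPS}(F,y)}\ge\sum_{i=1}^N q_i\, e^{-\frac{2}{b-a}\mathrm{CRPS}(F_i,y)}.$$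
   Context: A probability distribution function on $[a,b]$ is a non-decreasing function $F:[a,b]\to[0,1]$ with $F(a)=0$, $F(b)=1$, left-continuous and having a right limit at each point. A loss function $\lambda:\Gamma\times\Omega\to\mathbb{R}$ is $\eta$-mixable ($\eta>0$) if for every $N$, every probability vector $\mathbf{q}=(q_1,\dots,q_N)$ and every $c_1,\dots,c_N\in\Gamma$ there exists $f\in\Gamma$ with $\lambda(f,y)\le-\frac{1}{\eta}\ln\sum_{i=1}^N q_i e^{-\eta\lambda(c_i,y)}$ for all $y\in\Omega$. *)

theory Defs
  imports "HOL-Analysis.Analysis"
begin

text \<open>Probability distribution function on [a,b]: non-decreasing, values in [0,1],
  F a = 0, F b = 1, left-continuous at every point of (a,b] (left continuity at a is
  vacuous relative to [a,b]) and having a right limit at every point of [a,b).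
  Only the values on [a,b] matter.\<close>
definition pdf_on :: "real \<Rightarrow> real \<Rightarrow> (real \<Rightarrow> real) \<Rightarrow> bool" where
  "pdf_on a b F \<longleftrightarrow>
     mono_on {a..b} F \<and> (\<forall>u\<in>{a..b}. 0 \<le> F u \<and> F u \<le> 1) \<and>
     F a = 0 \<and> F b = 1 \<and>
     (\<forall>x\<in>{a<..b}. (F \<longlongrightarrow> F x) (at_left x)) \<and>
     (\<forall>x\<in>{a..<b}. \<exists>L. (F \<longlongrightarrow> L) (at_right x))"

definition heaviside :: "real \<Rightarrow> real" where
  "heaviside x = (if x < 0 then 0 else 1)"

definition crps :: "real \<Rightarrow> real \<Rightarrow> (real \<Rightarrow> real) \<Rightarrow> real \<Rightarrow> real" where
  "crps a b F y = integral {a..b} (\<lambda>u. (F u - heaviside (u - y))\<^sup>2)"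

definition mixable :: "real \<Rightarrow> 'g set \<Rightarrow> 'o set \<Rightarrow> ('g \<Rightarrow> 'o \<Rightarrow> real) \<Rightarrow> bool" where
  "mixable eta Gam Om loss \<longleftrightarrow> eta > 0 \<and>
     (\<forall>(N::nat) (q::nat \<Rightarrow> real) (c::nat \<Rightarrow> 'g).
        (\<forall>i<N. 0 \<le> q i) \<and> (\<Sum>i<N. q i) = 1 \<and> (\<forall>i<N. c i \<in> Gam) \<longrightarrow>
        (\<exists>f\<in>Gam. \<forall>y\<in>Om.
           loss f y \<le> - (1 / eta) * ln (\<Sum>i<N. q i * exp (- eta * loss (c i) y))))"

end

theory Submission
  imports Defs "HOL-Probability.Hoeffding"
begin

text \<open>The CRPS is the integral over u of the Brier loss of the forecast probability F(u)
  for the event y \<le> u. The Brier loss is 2-mixable with the substitution function of the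
  statement: after the change of variable d = z - x, the required pointwise inequality is
  Hoeffding's lemma for a Bernoulli variable with parameter x. Integrating pointwise
  mixability inequalities over an interval of length b - a divides the learning rate by
  b - a, because log-sum-exp is convex (a tangent-line form of Jensen's inequality).
  The substitution function is monotone in each F_i, maps 0 to 0 and 1 to 1 and is
  continuous, so it turns distribution functions into a distribution function.\<close>

lemma Hoeffding_two_point:
  fixes x l :: real
  assumes "0 \<le> x" "x \<le> 1"
  shows "(1 - x) * exp (- l * x) + x * exp (l * (1 - x)) \<le> exp (l\<^sup>2 / 8)"
proof -
  have nonneg: "(1 - x) * exp (- l * x) + x * exp (l * (1 - x)) \<le> exp (l\<^sup>2 / 8)"
    if "0 \<le> x" "x \<le> 1" "l \<ge> 0" for x l :: real
  proof -
    have pos: "1 + x * (exp l - 1) > 0"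
      using that by (smt (verit) exp_ge_zero mult_left_le_one_le mult_nonneg_nonneg one_le_exp_iff)
    have "exp (l * (1 - x)) = exp (- l * x) * exp l"
      by (simp add: exp_add [symmetric] algebra_simps)
    then have "(1 - x) * exp (- l * x) + x * exp (l * (1 - x))
        = exp (- l * x) * (1 + x * (exp l - 1))"
      by (simp add: algebra_simps)
    also have "\<dots> = exp (- l * x + ln (1 + x * (exp l - 1)))"
      unfolding exp_add using pos by simp
    also have "\<dots> \<le> exp (l\<^sup>2 / 8)"
      using Hoeffdings_lemma_aux [of l x] that by simp
    finally show ?thesis .
  qed
  show ?thesis
  proof (cases "l \<ge> 0")
    case True
    then show ?thesis using nonneg assms by blast
  next
    case False
    then show ?thesis
      using nonneg [of "1 - x" "- l"] assms by (simp add: algebra_simps)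
  qed
qed

lemma Brier_exp_mix_le_1:
  fixes x z :: real
  assumes "0 \<le> x" "x \<le> 1"
  shows "(1 - x) * exp (2 * x\<^sup>2 - 2 * z\<^sup>2) + x * exp (2 * (1 - x)\<^sup>2 - 2 * (1 - z)\<^sup>2) \<le> 1"
proof -
  define d where "d = z - x"
  have e1: "2 * x\<^sup>2 - 2 * z\<^sup>2 = - (4 * d) * x + - 2 * d\<^sup>2"
    and e2: "2 * (1 - x)\<^sup>2 - 2 * (1 - z)\<^sup>2 = (4 * d) * (1 - x) + - 2 * d\<^sup>2"
    unfolding d_def by (simp_all add: power2_eq_square algebra_simps)
  have "(1 - x) * exp (2 * x\<^sup>2 - 2 * z\<^sup>2) + x * exp (2 * (1 - x)\<^sup>2 - 2 * (1 - z)\<^sup>2)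
      = ((1 - x) * exp (- (4 * d) * x) + x * exp ((4 * d) * (1 - x))) * exp (- 2 * d\<^sup>2)"
    unfolding e1 e2 exp_add by (simp add: algebra_simps)
  also have "\<dots> \<le> exp ((4 * d)\<^sup>2 / 8) * exp (- 2 * d\<^sup>2)"
    using Hoeffding_two_point [OF assms, of "4 * d"] by (intro mult_right_mono) auto
  also have "\<dots> = 1"
    by (simp add: power2_eq_square mult_exp_exp)
  finally show ?thesis .
qed

lemma sum_weighted_exp_pos:
  fixes q w :: "nat \<Rightarrow> real"
  assumes "\<forall>i<N. 0 \<le> q i" and "(\<Sum>i<N. q i) = 1"
  shows "(\<Sum>i<N. q i * exp (w i)) > 0"
proof -
  obtain j where "j < N" "q j > 0"
    using assms by (smt (verit) lessThan_iff sum_nonpos)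
  then show ?thesis
    using assms by (intro sum_pos2 [of _ j]) auto
qed

definition Brier_subst :: "nat \<Rightarrow> (nat \<Rightarrow> real) \<Rightarrow> (nat \<Rightarrow> real) \<Rightarrow> real" where
  "Brier_subst N q z = 1/2 - 1/4 * ln ((\<Sum>i<N. q i * exp (-2 * (z i)\<^sup>2)) /
                                      (\<Sum>i<N. q i * exp (-2 * (1 - z i)\<^sup>2)))"

lemma Brier_subst_mono:
  assumes q: "\<forall>i<N. 0 \<le> q i" and q1: "(\<Sum>i<N. q i) = 1"
    and z: "\<forall>i<N. 0 \<le> z i \<and> z i \<le> z' i \<and> z' i \<le> 1"
  shows "Brier_subst N q z \<le> Brier_subst N q z'"
proof -
  define A where "A z = (\<Sum>i<N. q i * exp (-2 * (z i)\<^sup>2))" for z :: "nat \<Rightarrow> real"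
  define B where "B z = (\<Sum>i<N. q i * exp (-2 * (1 - z i)\<^sup>2))" for z :: "nat \<Rightarrow> real"
  have pos: "A v > 0" "B v > 0" for v
    unfolding A_def B_def by (rule sum_weighted_exp_pos [OF q q1])+
  have "A z' \<le> A z" "B z \<le> B z'"
    unfolding A_def B_def
    by (intro sum_mono mult_left_mono; use q z in \<open>auto intro!: power_mono\<close>)+
  then have "A z' / B z' \<le> A z / B z"
    using pos by (intro frac_le) (auto intro: less_imp_le)
  then have "ln (A z' / B z') \<le> ln (A z / B z)"
    using pos by simp
  then show ?thesis
    unfolding Brier_subst_def A_def B_def by simp
qed

lemma Brier_subst_const_0:
  assumes "(\<Sum>i<N. q i) = 1"
  shows "Brier_subst N q (\<lambda>_. 0) = 0"
  using assms by (simp add: Brier_subst_def ln_div flip: sum_distrib_right)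

lemma Brier_subst_const_1:
  assumes "(\<Sum>i<N. q i) = 1"
  shows "Brier_subst N q (\<lambda>_. 1) = 1"
  using assms by (simp add: Brier_subst_def ln_div flip: sum_distrib_right)

lemma Brier_subst_bounds:
  assumes q: "\<forall>i<N. 0 \<le> q i" and q1: "(\<Sum>i<N. q i) = 1"
    and z: "\<forall>i<N. 0 \<le> z i \<and> z i \<le> 1"
  shows "0 \<le> Brier_subst N q z" and "Brier_subst N q z \<le> 1"
proof -
  have "Brier_subst N q (\<lambda>_. 0) \<le> Brier_subst N q z"
    using z by (intro Brier_subst_mono [OF q q1]) auto
  then show "0 \<le> Brier_subst N q z"
    using Brier_subst_const_0 [OF q1] by simp
  have "Brier_subst N q z \<le> Brier_subst N q (\<lambda>_. 1)"
    using z by (intro Brier_subst_mono [OF q q1]) auto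
  then show "Brier_subst N q z \<le> 1"
    using Brier_subst_const_1 [OF q1] by simp
qed

lemma Brier_subst_mixes:
  assumes q: "\<forall>i<N. 0 \<le> q i" and q1: "(\<Sum>i<N. q i) = 1"
    and z: "\<forall>i<N. 0 \<le> z i \<and> z i \<le> 1"
  defines "x \<equiv> Brier_subst N q z"
  shows "(\<Sum>i<N. q i * exp (-2 * (z i)\<^sup>2)) \<le> exp (-2 * x\<^sup>2)"
    and "(\<Sum>i<N. q i * exp (-2 * (1 - z i)\<^sup>2)) \<le> exp (-2 * (1 - x)\<^sup>2)"
proof -
  define A where "A = (\<Sum>i<N. q i * exp (-2 * (z i)\<^sup>2))"
  define B where "B = (\<Sum>i<N. q i * exp (-2 * (1 - z i)\<^sup>2))"
  have pos: "A > 0" "B > 0"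
    unfolding A_def B_def by (rule sum_weighted_exp_pos [OF q q1])+
  have "ln (A / B) = 2 - 4 * x"
    unfolding x_def Brier_subst_def A_def B_def by simp
  then have "A / B = exp (2 - 4 * x)"
    using pos by (metis divide_pos_pos exp_ln)
  then have A_eq: "A = B * exp (2 - 4 * x)"
    using pos by (simp add: field_simps)
  have x01: "0 \<le> x" "x \<le> 1"
    unfolding x_def using Brier_subst_bounds [OF q q1 z] by auto
  \<comment> \<open>weights chosen so that, by A_eq, the left side collapses to B exp (2 * (1 - x)^2)\<close>
  have "(1 - x) * exp (2 * x\<^sup>2) * A + x * exp (2 * (1 - x)\<^sup>2) * B
      = (\<Sum>i<N. q i * ((1 - x) * exp (2 * x\<^sup>2 - 2 * (z i)\<^sup>2)
                     + x * exp (2 * (1 - x)\<^sup>2 - 2 * (1 - z i)\<^sup>2)))"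
    unfolding A_def B_def sum_distrib_left sum.distrib [symmetric]
    by (intro sum.cong refl) (simp add: exp_diff exp_minus divide_inverse algebra_simps)
  also have "\<dots> \<le> (\<Sum>i<N. q i * 1)"
    using q Brier_exp_mix_le_1 [OF x01] by (intro sum_mono mult_left_mono) auto
  finally have le_1: "(1 - x) * exp (2 * x\<^sup>2) * A + x * exp (2 * (1 - x)\<^sup>2) * B \<le> 1"
    using q1 by simp
  have "exp (2 * x\<^sup>2) * exp (2 - 4 * x) = exp (2 * (1 - x)\<^sup>2)"
    unfolding mult_exp_exp by (simp add: power2_eq_square algebra_simps)
  then have "B * exp (2 * (1 - x)\<^sup>2) \<le> 1"
    using le_1 unfolding A_eq by (simp add: algebra_simps)
  then have B_le: "B \<le> exp (-2 * (1 - x)\<^sup>2)"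
    by (simp add: exp_minus field_simps)
  then show "B \<le> exp (-2 * (1 - x)\<^sup>2)"
    unfolding B_def .
  have "A \<le> exp (-2 * (1 - x)\<^sup>2) * exp (2 - 4 * x)"
    unfolding A_eq using B_le by (simp add: mult_right_mono)
  also have "\<dots> = exp (-2 * x\<^sup>2)"
    unfolding mult_exp_exp by (simp add: power2_eq_square algebra_simps)
  finally show "A \<le> exp (-2 * x\<^sup>2)" .
qed

lemma tendsto_Brier_subst:
  fixes Fs :: "nat \<Rightarrow> 'a \<Rightarrow> real"
  assumes q: "\<forall>i<N. 0 \<le> q i" and q1: "(\<Sum>i<N. q i) = 1"
    and lim: "\<forall>i<N. (Fs i \<longlongrightarrow> L i) F"
  shows "((\<lambda>u. Brier_subst N q (\<lambda>i. Fs i u)) \<longlongrightarrow> Brier_subst N q L) F"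
proof -
  have "(\<Sum>i<N. q i * exp (-2 * (L i)\<^sup>2)) > 0" "(\<Sum>i<N. q i * exp (-2 * (1 - L i)\<^sup>2)) > 0"
    by (rule sum_weighted_exp_pos [OF q q1])+
  then show ?thesis
    unfolding Brier_subst_def using lim by (intro tendsto_intros) auto
qed

lemma pdf_on_Brier_subst:
  fixes Fs :: "nat \<Rightarrow> real \<Rightarrow> real"
  assumes q: "\<forall>i<N. 0 \<le> q i" and q1: "(\<Sum>i<N. q i) = 1"
    and pdf: "\<forall>i<N. pdf_on a b (Fs i)"
  shows "pdf_on a b (\<lambda>u. Brier_subst N q (\<lambda>i. Fs i u))"
proof -
  have mono: "\<forall>i<N. mono_on {a..b} (Fs i)"
    and F01: "\<forall>i<N. \<forall>u\<in>{a..b}. 0 \<le> Fs i u \<and> Fs i u \<le> 1"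
    and Fa: "\<forall>i<N. Fs i a = 0" and Fb: "\<forall>i<N. Fs i b = 1"
    and left: "\<forall>i<N. \<forall>x\<in>{a<..b}. (Fs i \<longlongrightarrow> Fs i x) (at_left x)"
    and right: "\<forall>i<N. \<forall>x\<in>{a..<b}. \<exists>L. (Fs i \<longlongrightarrow> L) (at_right x)"
    using pdf unfolding pdf_on_def by auto
  show ?thesis
    unfolding pdf_on_def
  proof (intro conjI ballI)
    show "mono_on {a..b} (\<lambda>u. Brier_subst N q (\<lambda>i. Fs i u))"
      using mono F01 by (intro mono_onI Brier_subst_mono [OF q q1]) (auto simp: mono_on_def)
  next
    fix u assume "u \<in> {a..b}"
    then show "0 \<le> Brier_subst N q (\<lambda>i. Fs i u)" "Brier_subst N q (\<lambda>i. Fs i u) \<le> 1"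
      using Brier_subst_bounds [OF q q1] F01 by auto
  next
    show "Brier_subst N q (\<lambda>i. Fs i a) = 0" "Brier_subst N q (\<lambda>i. Fs i b) = 1"
      using Brier_subst_const_0 [OF q1] Brier_subst_const_1 [OF q1] Fa Fb
      by (auto simp: Brier_subst_def)
  next
    fix x assume "x \<in> {a<..b}"
    then show "((\<lambda>u. Brier_subst N q (\<lambda>i. Fs i u)) \<longlongrightarrow> Brier_subst N q (\<lambda>i. Fs i x)) (at_left x)"
      using left by (intro tendsto_Brier_subst [OF q q1]) auto
  next
    fix x assume "x \<in> {a..<b}"
    then have "\<forall>i. \<exists>L. i < N \<longrightarrow> (Fs i \<longlongrightarrow> L) (at_right x)"
      using right by auto
    then obtain L where "\<forall>i<N. (Fs i \<longlongrightarrow> L i) (at_right x)"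
      by metis
    then show "\<exists>L. ((\<lambda>u. Brier_subst N q (\<lambda>i. Fs i u)) \<longlongrightarrow> L) (at_right x)"
      using tendsto_Brier_subst [OF q q1] by blast
  qed
qed

lemma sum_exp_ge_exp_tangent:
  fixes q c w :: "nat \<Rightarrow> real"
  assumes q: "\<forall>i<N. 0 \<le> q i" and S: "S = (\<Sum>i<N. q i * exp (c i))" and S_pos: "S > 0"
  shows "S * exp (\<Sum>i<N. (q i * exp (c i) / S) * (w i - c i)) \<le> (\<Sum>i<N. q i * exp (w i))"
proof -
  define p where "p i = q i * exp (c i) / S" for i
  have "N \<noteq> 0"
    using S S_pos by (metis lessThan_0 order_less_irrefl sum.empty)
  moreover have "(\<Sum>i<N. p i) = 1"
    using S S_pos by (simp add: p_def flip: sum_divide_distrib)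
  ultimately have "exp (\<Sum>i<N. p i * (w i - c i)) \<le> (\<Sum>i<N. p i * exp (w i - c i))"
    using q S_pos by (intro convex_on_sum [OF _ _ exp_convex, simplified]) (auto simp: p_def)
  also have "\<dots> = (\<Sum>i<N. q i * exp (w i)) / S"
    by (simp add: p_def exp_diff sum_divide_distrib)
  finally show ?thesis
    using S_pos by (simp add: p_def field_simps)
qed

lemma sum_exp_integral_mean_le:
  fixes f :: "nat \<Rightarrow> real \<Rightarrow> real" and g :: "real \<Rightarrow> real"
  assumes ab: "a < b" and q: "\<forall>i<N. 0 \<le> q i" and q1: "(\<Sum>i<N. q i) = 1"
    and f: "\<forall>i<N. (f i has_integral I i) {a..b}" and g: "(g has_integral J) {a..b}"
    and pointwise: "\<forall>u\<in>{a..b}. (\<Sum>i<N. q i * exp (f i u)) \<le> exp (g u)"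
  shows "(\<Sum>i<N. q i * exp (I i / (b - a))) \<le> exp (J / (b - a))"
proof -
  define L where "L = b - a"
  have L_pos: "L > 0"
    using ab by (simp add: L_def)
  define c where "c i = I i / L" for i
  define S where "S = (\<Sum>i<N. q i * exp (c i))"
  have S_pos: "S > 0"
    unfolding S_def by (rule sum_weighted_exp_pos [OF q q1])
  define p where "p i = q i * exp (c i) / S" for i
  have tangent: "ln S + (\<Sum>i<N. p i * (f i u - c i)) \<le> g u" if "u \<in> {a..b}" for u
  proof -
    have "exp (ln S + (\<Sum>i<N. p i * (f i u - c i)))
        = S * exp (\<Sum>i<N. p i * (f i u - c i))"
      using S_pos by (simp add: exp_add)
    also have "\<dots> \<le> (\<Sum>i<N. q i * exp (f i u))"
      unfolding p_def by (rule sum_exp_ge_exp_tangent [OF q S_def S_pos])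
    also have "\<dots> \<le> exp (g u)"
      using pointwise that by blast
    finally show ?thesis
      by simp
  qed
  have const: "((\<lambda>u. k) has_integral (L * k)) {a..b}" for k
    using has_integral_const_real [of k a b] ab by (simp add: L_def)
  have "((\<lambda>u. ln S + (\<Sum>i<N. p i * (f i u - c i))) has_integral
      (L * ln S + (\<Sum>i<N. p i * (I i - L * c i)))) {a..b}"
    using f by (intro has_integral_add const has_integral_sum has_integral_mult_right
        has_integral_diff) auto
  then have "L * ln S + (\<Sum>i<N. p i * (I i - L * c i)) \<le> J"
    using g tangent by (rule has_integral_le)
  moreover have "(\<Sum>i<N. p i * (I i - L * c i)) = 0"
    using L_pos by (simp add: c_def)
  ultimately have "ln S \<le> J / L"
    using L_pos by (simp add: field_simps)
  then have "S \<le> exp (J / L)"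
    using S_pos by (metis exp_le_cancel_iff exp_ln)
  then show ?thesis
    unfolding S_def c_def L_def .
qed

lemma crps_has_integral:
  fixes G :: "real \<Rightarrow> real"
  assumes mono: "mono_on {a..b} G" and G01: "\<forall>u\<in>{a..b}. 0 \<le> G u \<and> G u \<le> 1"
  shows "((\<lambda>u. (G u - heaviside (u - y))\<^sup>2) has_integral crps a b G y) {a..b}"
proof -
  define H where "H u = heaviside (u - y)" for u
  have H_mono: "mono_on {a..b} H"
    by (rule mono_onI) (auto simp: H_def heaviside_def)
  have H01: "0 \<le> H u" "H u \<le> 1" for u
    by (auto simp: H_def heaviside_def)
  have "mono_on {a..b} (\<lambda>u. (G u)\<^sup>2)" "mono_on {a..b} (\<lambda>u. G u * H u)"
    using mono_onD [OF mono] mono_onD [OF H_mono] G01 H01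
    by (auto intro!: mono_onI power_mono mult_mono)
  from this [THEN integrable_on_mono_on] integrable_on_mono_on [OF H_mono]
  have "(\<lambda>u. (G u)\<^sup>2 - 2 * (G u * H u) + H u) integrable_on {a..b}"
    by (intro integrable_add integrable_diff) auto
  moreover have "(\<lambda>u. (G u - heaviside (u - y))\<^sup>2) = (\<lambda>u. (G u)\<^sup>2 - 2 * (G u * H u) + H u)"
    by (auto simp: H_def heaviside_def power2_eq_square algebra_simps)
  ultimately show ?thesis
    unfolding crps_def by (simp add: integrable_integral)
qed

lemma crps_Brier_subst_mixes:
  fixes Fs :: "nat \<Rightarrow> real \<Rightarrow> real"
  assumes ab: "a < b" and q: "\<forall>i<N. 0 \<le> q i" and q1: "(\<Sum>i<N. q i) = 1"
    and pdf: "\<forall>i<N. pdf_on a b (Fs i)"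
  defines "F \<equiv> \<lambda>u. Brier_subst N q (\<lambda>i. Fs i u)"
  shows "(\<Sum>i<N. q i * exp (- (2 / (b - a)) * crps a b (Fs i) y))
           \<le> exp (- (2 / (b - a)) * crps a b F y)"
proof -
  define loss where "loss G u = (G u - heaviside (u - y))\<^sup>2" for G :: "real \<Rightarrow> real" and u
  have pdf_F: "pdf_on a b F"
    unfolding F_def by (rule pdf_on_Brier_subst [OF q q1 pdf])
  have integral: "((\<lambda>u. -2 * loss G u) has_integral (-2 * crps a b G y)) {a..b}"
    if "pdf_on a b G" for G
    using that unfolding loss_def pdf_on_def by (intro has_integral_mult_right crps_has_integral) auto
  have "(\<Sum>i<N. q i * exp (-2 * loss (Fs i) u)) \<le> exp (-2 * loss F u)" if u: "u \<in> {a..b}" for u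
  proof -
    have "\<forall>i<N. 0 \<le> Fs i u \<and> Fs i u \<le> 1"
      using pdf u by (auto simp: pdf_on_def)
    note mixes = Brier_subst_mixes [OF q q1 this]
    show ?thesis
    proof (cases "u < y")
      case True
      then show ?thesis
        using mixes(1) by (simp add: F_def loss_def heaviside_def)
    next
      case False
      then show ?thesis
        using mixes(2) by (simp add: F_def loss_def heaviside_def power2_commute)
    qed
  qed
  then have "(\<Sum>i<N. q i * exp (-2 * crps a b (Fs i) y / (b - a)))
      \<le> exp (-2 * crps a b F y / (b - a))"
    using pdf pdf_F integral by (intro sum_exp_integral_mean_le [OF ab q q1]) auto
  then show ?thesis
    by simp
qed

lemma mixableI_exp:
  assumes eta: "eta > 0"
    and mix: "\<And>(N::nat) (q::nat \<Rightarrow> real) c. \<forall>i<N. 0 \<le> q i \<Longrightarrow> (\<Sum>i<N. q i) = 1 \<Longrightarrow> \<forall>i<N. c i \<in> Gam \<Longrightarrow>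
      \<exists>f\<in>Gam. \<forall>y\<in>Om. (\<Sum>i<N. q i * exp (- eta * loss (c i) y)) \<le> exp (- eta * loss f y)"
  shows "mixable eta Gam Om loss"
  unfolding mixable_def
proof (intro conjI eta allI impI)
  fix N :: nat and q :: "nat \<Rightarrow> real" and c
  assume "(\<forall>i<N. 0 \<le> q i) \<and> (\<Sum>i<N. q i) = 1 \<and> (\<forall>i<N. c i \<in> Gam)"
  then have q: "\<forall>i<N. 0 \<le> q i" and q1: "(\<Sum>i<N. q i) = 1" and c: "\<forall>i<N. c i \<in> Gam"
    by auto
  obtain f where f: "f \<in> Gam"
    and le: "\<forall>y\<in>Om. (\<Sum>i<N. q i * exp (- eta * loss (c i) y)) \<le> exp (- eta * loss f y)"
    using mix [OF q q1 c] by blast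
  have "loss f y \<le> - (1 / eta) * ln (\<Sum>i<N. q i * exp (- eta * loss (c i) y))" if "y \<in> Om" for y
  proof -
    have "ln (\<Sum>i<N. q i * exp (- eta * loss (c i) y)) \<le> - eta * loss f y"
      using le that sum_weighted_exp_pos [OF q q1] by (metis exp_gt_zero ln_exp ln_le_cancel_iff)
    then show ?thesis
      using eta by (simp add: field_simps)
  qed
  with f show "\<exists>f\<in>Gam. \<forall>y\<in>Om. loss f y \<le> - (1 / eta) * ln (\<Sum>i<N. q i * exp (- eta * loss (c i) y))"
    by blast
qed

theorem theorem2:
  fixes a b :: real
  assumes "a < b"
  shows "mixable (2 / (b - a)) {F. pdf_on a b F} {a..b} (crps a b)
    \<and> (\<forall>(N::nat) (q::nat \<Rightarrow> real) (Fs::nat \<Rightarrow> real \<Rightarrow> real).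
         N \<ge> 1 \<and> (\<forall>i<N. 0 \<le> q i) \<and> (\<Sum>i<N. q i) = 1 \<and> (\<forall>i<N. pdf_on a b (Fs i)) \<longrightarrow>
         (let F = (\<lambda>u. 1/2 - 1/4 * ln ((\<Sum>i<N. q i * exp (-2 * (Fs i u)\<^sup>2)) /
                                        (\<Sum>i<N. q i * exp (-2 * (1 - Fs i u)\<^sup>2))))
          in pdf_on a b F \<and>
             (\<forall>y\<in>{a..b}. exp (- (2 / (b - a)) * crps a b F y)
                 \<ge> (\<Sum>i<N. q i * exp (- (2 / (b - a)) * crps a b (Fs i) y)))))"
proof -
  have F_eq: "(\<lambda>u. 1/2 - 1/4 * ln ((\<Sum>i<N. q i * exp (-2 * (Fs i u)\<^sup>2)) /
                                     (\<Sum>i<N. q i * exp (-2 * (1 - Fs i u)\<^sup>2))))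
      = (\<lambda>u. Brier_subst N q (\<lambda>i. Fs i u))" for N q and Fs :: "nat \<Rightarrow> real \<Rightarrow> real"
    by (simp add: Brier_subst_def)
  have "mixable (2 / (b - a)) {F. pdf_on a b F} {a..b} (crps a b)"
  proof (rule mixableI_exp)
    fix N :: nat and q :: "nat \<Rightarrow> real" and Fs :: "nat \<Rightarrow> real \<Rightarrow> real"
    assume "\<forall>i<N. 0 \<le> q i" "(\<Sum>i<N. q i) = 1" "\<forall>i<N. Fs i \<in> {F. pdf_on a b F}"
    then show "\<exists>F\<in>{F. pdf_on a b F}. \<forall>y\<in>{a..b}. (\<Sum>i<N. q i * exp (- (2 / (b - a)) * crps a b (Fs i) y))
        \<le> exp (- (2 / (b - a)) * crps a b F y)"
      using pdf_on_Brier_subst crps_Brier_subst_mixes [OF assms] by blast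
  qed (use assms in simp)
  then show ?thesis
    unfolding F_eq Let_def using pdf_on_Brier_subst crps_Brier_subst_mixes [OF assms] by blast
qed

end
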